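(* For $n\in\mathbb{N}_{\geq 1}$ let $c_n$ denote the minimal Colless index among all rooted binary trees with $n$ leaves. Then $c_1=c_2=0$, and for all $n\in\mathbb{N}_{\geq 1}$, $$c_{2n}=2c_n,\qquad c_{2n+1}=c_{n+1}+c_n+1.$$
   Context: A rooted binary tree with $n\geq 2$ leaves is a rooted tree whose root has degree 2 and all other internal (non-leaf) nodes have degree 3; for $n=1$ it is a single node (which is both root and leaf). For an internal node $v$ with children $v_1,v_2$, let $\kappa(v_i)$ be the number of leaves descending from $v_i$ (with $\kappa(v_i)=1$ if $v_i$ is a leaf). The Colless index of a rooted binary tree $T$ is $\mathcal{C}(T)=\sum_{v}|\kappa(v_1)-\kappa(v_2)|$, the sum over all internal nodes $v$ of $T$. *)

theory Defs
  imports Main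
begin

text \<open>Rooted binary trees (shapes): a leaf, or an internal node with two children.
  Child order is irrelevant for the Colless index.\<close>
datatype btree = Leaf | Node btree btree

fun leaves :: "btree \<Rightarrow> nat" where
  "leaves Leaf = 1"
| "leaves (Node l r) = leaves l + leaves r"

fun colless :: "btree \<Rightarrow> int" where
  "colless Leaf = 0"
| "colless (Node l r) = \<bar>int (leaves l) - int (leaves r)\<bar> + colless l + colless r"

definition min_colless :: "nat \<Rightarrow> int" where
  "min_colless n = Min (colless ` {t. leaves t = n})"

end

theory Submission
  imports Defs
begin

text \<open>The minimum is attained by the maximally balanced tree, which splits \<open>n\<close> leaves into
  \<open>\<lceil>n/2\<rceil>\<close> and \<open>\<lfloor>n/2\<rfloor>\<close> at every node; its Colless index \<open>c n\<close> satisfies the two recursions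
  directly. Conversely, a tree whose root splits \<open>a + b\<close> leaves into \<open>a\<close> and \<open>b\<close> has Colless
  index at least \<open>c (a + b)\<close> by induction on the tree, because
  \<open>c (a + b) \<le> c a + c b + \<bar>a - b\<bar>\<close>. This inequality follows by strong induction on \<open>a + b\<close>:
  write \<open>a\<close> and \<open>b\<close> as \<open>2x\<close> or \<open>2x + 1\<close>, expand both sides with the recursions, and apply
  the induction hypothesis to pairs of halves.\<close>

lemma leaves_pos: "0 < leaves t"
  by (induction t) auto

lemma finite_leaves_le: "finite {t. leaves t \<le> n}"
proof (induction n)
  case 0
  have "{t. leaves t \<le> 0} = {}"
    using leaves_pos leD by blast
  then show ?case
    by (metis finite.emptyI)
next
  case (Suc n)
  have "{t. leaves t \<le> Suc n} \<subseteq> insert Leaf (case_prod Node ` ({t. leaves t \<le> n} \<times> {t. leaves t \<le> n}))"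
  proof
    fix t assume t: "t \<in> {t. leaves t \<le> Suc n}"
    show "t \<in> insert Leaf (case_prod Node ` ({t. leaves t \<le> n} \<times> {t. leaves t \<le> n}))"
    proof (cases t)
      case (Node l r)
      with t have "(l, r) \<in> {t. leaves t \<le> n} \<times> {t. leaves t \<le> n}"
        using leaves_pos[of l] leaves_pos[of r] by auto
      then show ?thesis
        using Node by force
    qed simp
  qed
  then show ?case
    using Suc finite_subset by blast
qed

fun max_balanced :: "nat \<Rightarrow> btree" where
  "max_balanced n =
    (if n \<le> 1 then Leaf else Node (max_balanced ((n + 1) div 2)) (max_balanced (n div 2)))"

declare max_balanced.simps [simp del]

lemma leaves_max_balanced: "n \<ge> 1 \<Longrightarrow> leaves (max_balanced n) = n"
proof (induction n rule: max_balanced.induct)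
  case (1 n)
  then show ?case
    by (subst max_balanced.simps) (auto simp del: One_nat_def)
qed

lemma max_balanced_double:
  "n \<ge> 1 \<Longrightarrow> max_balanced (2 * n) = Node (max_balanced n) (max_balanced n)"
  by (subst max_balanced.simps) simp

lemma max_balanced_odd:
  "n \<ge> 1 \<Longrightarrow> max_balanced (2 * n + 1) = Node (max_balanced (n + 1)) (max_balanced n)"
  by (subst max_balanced.simps) simp

definition balanced_colless :: "nat \<Rightarrow> int" where
  "balanced_colless n = colless (max_balanced n)"

lemma balanced_colless_le_1 [simp]: "n \<le> 1 \<Longrightarrow> balanced_colless n = 0"
  by (simp add: balanced_colless_def max_balanced.simps)

lemma balanced_colless_double: "balanced_colless (2 * n) = 2 * balanced_colless n"
proof (cases "n \<ge> 1")
  case True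
  then show ?thesis
    by (simp add: balanced_colless_def max_balanced_double)
qed simp

lemma balanced_colless_odd:
  "balanced_colless (2 * n + 1) = balanced_colless (n + 1) + balanced_colless n + of_bool (n \<ge> 1)"
proof (cases "n \<ge> 1")
  case True
  then show ?thesis
    unfolding balanced_colless_def max_balanced_odd[OF True] by (simp add: leaves_max_balanced)
qed simp

lemma balanced_colless_add_le_even_even:
  assumes "balanced_colless (x + y) \<le> balanced_colless x + balanced_colless y + \<bar>int x - int y\<bar>"
  shows "balanced_colless (2 * x + 2 * y)
    \<le> balanced_colless (2 * x) + balanced_colless (2 * y) + \<bar>int (2 * x) - int (2 * y)\<bar>"
proof -
  have "balanced_colless (2 * x + 2 * y) = 2 * balanced_colless (x + y)"
    using balanced_colless_double[of "x + y"] by (simp add: distrib_left)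
  also have "\<dots> \<le> 2 * (balanced_colless x + balanced_colless y + \<bar>int x - int y\<bar>)"
    using assms by simp
  also have "\<dots> = balanced_colless (2 * x) + balanced_colless (2 * y) + \<bar>int (2 * x) - int (2 * y)\<bar>"
    by (auto simp: balanced_colless_double abs_if)
  finally show ?thesis .
qed

lemma balanced_colless_add_le_even_odd:
  assumes "x \<ge> 1"
    and "balanced_colless (x + (y + 1))
      \<le> balanced_colless x + balanced_colless (y + 1) + \<bar>int x - int (y + 1)\<bar>"
    and "balanced_colless (x + y) \<le> balanced_colless x + balanced_colless y + \<bar>int x - int y\<bar>"
  shows "balanced_colless (2 * x + (2 * y + 1))
    \<le> balanced_colless (2 * x) + balanced_colless (2 * y + 1) + \<bar>int (2 * x) - int (2 * y + 1)\<bar>"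
proof -
  have odd_sum: "balanced_colless (2 * x + (2 * y + 1))
      = balanced_colless (x + (y + 1)) + balanced_colless (x + y) + 1"
    using balanced_colless_odd[of "x + y"] assms(1) by (simp add: add.assoc)
  show ?thesis
  proof (cases "y = 0")
    case True
    \<comment> \<open>the bound for (x, 0) is too weak by one here; the slack in \<open>\<bar>2 x - 1\<bar> \<ge> x\<close> pays for it\<close>
    then show ?thesis
      using odd_sum assms(1,2) by (simp add: balanced_colless_double)
  next
    case False
    have "balanced_colless (2 * y + 1) = balanced_colless (y + 1) + balanced_colless y + 1"
      using False balanced_colless_odd[of y] by simp
    moreover have "\<bar>int x - int (y + 1)\<bar> + \<bar>int x - int y\<bar> = \<bar>int (2 * x) - int (2 * y + 1)\<bar>"
      by arith
    ultimately show ?thesis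
      using odd_sum assms(2,3) balanced_colless_double[of x] by linarith
  qed
qed

lemma balanced_colless_add_le_odd_odd:
  assumes "balanced_colless (x + 1 + y)
      \<le> balanced_colless (x + 1) + balanced_colless y + \<bar>int (x + 1) - int y\<bar>"
    and "balanced_colless (x + (y + 1))
      \<le> balanced_colless x + balanced_colless (y + 1) + \<bar>int x - int (y + 1)\<bar>"
  shows "balanced_colless (2 * x + 1 + (2 * y + 1))
    \<le> balanced_colless (2 * x + 1) + balanced_colless (2 * y + 1)
      + \<bar>int (2 * x + 1) - int (2 * y + 1)\<bar>"
proof (cases "x = 0 \<and> y = 0")
  case True
  then show ?thesis
    using balanced_colless_double[of 1] by (simp add: numeral_2_eq_2)
next
  case False
  have "balanced_colless (2 * x + 1 + (2 * y + 1))
      = balanced_colless (x + 1 + y) + balanced_colless (x + (y + 1))"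
    using balanced_colless_double[of "x + y + 1"] by (simp add: algebra_simps)
  also have "\<dots> \<le> (balanced_colless (x + 1) + balanced_colless y + \<bar>int (x + 1) - int y\<bar>)
      + (balanced_colless x + balanced_colless (y + 1) + \<bar>int x - int (y + 1)\<bar>)"
    using assms by simp
  also have "\<dots> \<le> balanced_colless (2 * x + 1) + balanced_colless (2 * y + 1)
      + \<bar>int (2 * x + 1) - int (2 * y + 1)\<bar>"
    using False balanced_colless_odd[of x] balanced_colless_odd[of y] by auto
  finally show ?thesis .
qed

lemma balanced_colless_add_le:
  "balanced_colless (a + b) \<le> balanced_colless a + balanced_colless b + \<bar>int a - int b\<bar>"
proof (induction "a + b" arbitrary: a b rule: less_induct)
  case less
  show ?case
  proof (cases "a = 0 \<or> b = 0")
    case True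
    then show ?thesis by auto
  next
    case False
    consider "even a" "even b" | "even a" "odd b" | "odd a" "even b" | "odd a" "odd b"
      by blast
    then show ?thesis
    proof cases
      case 1
      then obtain x y where "a = 2 * x" "b = 2 * y"
        by (blast elim: evenE)
      with False show ?thesis
        using less[of x y] balanced_colless_add_le_even_even[of x y] by simp
    next
      case 2
      then obtain x y where "a = 2 * x" "b = 2 * y + 1"
        by (blast elim: evenE oddE)
      with False show ?thesis
        using less[of x "y + 1"] less[of x y] balanced_colless_add_le_even_odd[of x y] by simp
    next
      case 3
      then obtain x y where "a = 2 * y + 1" "b = 2 * x"
        by (blast elim: evenE oddE)
      with False show ?thesis
        using less[of x "y + 1"] less[of x y] balanced_colless_add_le_even_odd[of x y]
        by (simp add: ac_simps abs_minus_commute)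
    next
      case 4
      then obtain x y where "a = 2 * x + 1" "b = 2 * y + 1"
        by (blast elim: oddE)
      then show ?thesis
        using less[of "x + 1" y] less[of x "y + 1"] balanced_colless_add_le_odd_odd[of x y] by simp
    qed
  qed
qed

lemma balanced_colless_le_colless: "balanced_colless (leaves t) \<le> colless t"
proof (induction t)
  case (Node l r)
  then show ?case
    using balanced_colless_add_le[of "leaves l" "leaves r"] by simp
qed simp

lemma min_colless_eq_balanced_colless:
  assumes "n \<ge> 1"
  shows "min_colless n = balanced_colless n"
  unfolding min_colless_def
proof (rule Min_eqI)
  have "{t. leaves t = n} \<subseteq> {t. leaves t \<le> n}"
    by auto
  then show "finite (colless ` {t. leaves t = n})"
    using finite_leaves_le finite_subset by blast
  show "y \<ge> balanced_colless n" if "y \<in> colless ` {t. leaves t = n}" for y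
    using that balanced_colless_le_colless by auto
  show "balanced_colless n \<in> colless ` {t. leaves t = n}"
    using assms leaves_max_balanced unfolding balanced_colless_def by blast
qed

theorem theorem1:
  shows "min_colless 1 = 0 \<and> min_colless 2 = 0 \<and>
    (\<forall>n::nat. n \<ge> 1 \<longrightarrow>
       min_colless (2 * n) = 2 * min_colless n \<and>
       min_colless (2 * n + 1) = min_colless (n + 1) + min_colless n + 1)"
  using min_colless_eq_balanced_colless balanced_colless_double[of 1]
    balanced_colless_double balanced_colless_odd
  by simp

end
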